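(* There exist $c>0$ and $\tilde y>0$ such that for every $y>\tilde y$, $$\Big|\int_{-\infty}^{\infty}\big|\varphi_x(iy)-iy\big|^2\,dx-\min\Big\{1,\frac{\pi}{4y}\Big\}\Big|<\frac{c}{y^3}.$$
   Context: For $x\in\mathbb{R}$ and $z$ in the upper half plane $\mathbb{H}=\{z\in\mathbb{C}:\operatorname{Im} z>0\}$, $\varphi_x(z)=x+\sqrt{(z-x)^2-1}$, using the branch of the square root with positive imaginary part. *)

theory Defs
  imports "HOL-Analysis.Analysis"
begin

text \<open>The branch of the square root with positive imaginary part
  (well-defined for w not in [0, infinity)).\<close>
definition sqrt_upper :: "complex \<Rightarrow> complex" where
  "sqrt_upper w = (THE s. s^2 = w \<and> Im s > 0)"

definition phi :: "real \<Rightarrow> complex \<Rightarrow> complex" where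
  "phi x z = complex_of_real x + sqrt_upper ((z - complex_of_real x)^2 - 1)"

end

theory Submission
  imports Defs
begin

text \<open>With \<open>w = iy - x\<close> and \<open>s\<close> the upper square root of \<open>w\<^sup>2 - 1\<close>, one has
  \<open>\<phi>\<^sub>x(iy) - iy = s - w\<close> and \<open>(s - w)(s + w) = -1\<close>. Hence \<open>|s - w|\<^sup>2\<close> is the reciprocal
  of \<open>|s + w|\<^sup>2 > 1\<close>, while the parallelogram law makes their sum
  \<open>2|w\<^sup>2 - 1| + 2|w|\<^sup>2 = 4(x\<^sup>2 + y\<^sup>2) + O(1)\<close>. So the integrand is
  \<open>1/(4(x\<^sup>2 + y\<^sup>2))\<close> up to an error \<open>O(1/(y\<^sup>2(x\<^sup>2 + y\<^sup>2)))\<close>, and integrating with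
  \<open>\<integral> dx/(x\<^sup>2 + y\<^sup>2) = \<pi>/y\<close> gives \<open>\<pi>/(4y) + O(1/y\<^sup>3)\<close>; for \<open>y > 2\<close> the minimum
  is \<open>\<pi>/(4y)\<close>.\<close>

lemma sqrt_upper_eqI:
  assumes "s^2 = w" and "Im s > 0"
  shows "sqrt_upper w = s"
  unfolding sqrt_upper_def
proof (rule the_equality)
  fix t assume t: "t^2 = w \<and> Im t > 0"
  then have "t^2 = s^2" using assms(1) by simp
  then have "t = s \<or> t = -s" by (simp add: power2_eq_iff)
  then show "t = s" using t assms(2) by auto
qed (use assms in simp)

lemma
  assumes "Im w \<noteq> 0 \<or> Re w < 0"
  shows power2_sqrt_upper: "(sqrt_upper w)^2 = w"
    and Im_sqrt_upper_pos: "Im (sqrt_upper w) > 0"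
proof -
  define t where "t = csqrt w"
  have t2: "t^2 = w" unfolding t_def by simp
  have "Im t \<noteq> 0"
  proof
    assume "Im t = 0"
    then have "Im w = 0 \<and> Re w = (Re t)^2"
      unfolding t2[symmetric] by (simp add: Re_power2 Im_power2)
    then show False using assms by simp
  qed
  then have "sqrt_upper w = (if Im t > 0 then t else -t)"
    by (intro sqrt_upper_eqI) (auto simp: t2)
  then show "(sqrt_upper w)^2 = w" "Im (sqrt_upper w) > 0"
    using \<open>Im t \<noteq> 0\<close> t2 by auto
qed

lemma square_minus_one_not_nonneg_real:
  fixes w :: complex
  assumes "Im w > 0"
  shows "Im (w^2 - 1) \<noteq> 0 \<or> Re (w^2 - 1) < 0"
proof (cases "Re w = 0")
  case True
  then have "Re (w^2 - 1) = - ((Im w)^2) - 1" by (simp add: Re_power2)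
  then show ?thesis by (smt (verit) zero_le_power2)
next
  case False
  then show ?thesis using assms by (simp add: Im_power2)
qed

lemma norm_sub_add_of_square_minus_one:
  fixes s w :: complex
  assumes "s^2 = w^2 - 1"
  shows "(cmod (s - w))^2 * (cmod (s + w))^2 = 1"
    and "(cmod (s - w))^2 + (cmod (s + w))^2 = 2 * cmod (w^2 - 1) + 2 * (cmod w)^2"
proof -
  have "(s - w) * (s + w) = -1" using assms by (simp add: power2_eq_square algebra_simps)
  then have "cmod (s - w) * cmod (s + w) = 1" by (metis norm_minus_cancel norm_mult norm_one)
  then show "(cmod (s - w))^2 * (cmod (s + w))^2 = 1" by (metis power_mult_distrib power_one)
  have "(cmod (s - w))^2 + (cmod (s + w))^2 = 2 * (cmod s)^2 + 2 * (cmod w)^2"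
    unfolding cmod_power2 by (simp add: power2_eq_square algebra_simps)
  then show "(cmod (s - w))^2 + (cmod (s + w))^2 = 2 * cmod (w^2 - 1) + 2 * (cmod w)^2"
    by (simp add: norm_power flip: assms)
qed

lemma product_one_small_factor_eq:
  fixes a b :: real
  assumes "a * b = 1" and "b \<le> a"
  shows "b = (a + b - sqrt ((a + b)^2 - 4)) / 2"
proof -
  have "(a + b)^2 - 4 = (a - b)^2" using assms(1) by (simp add: power2_eq_square algebra_simps)
  then show ?thesis using assms(2) by simp
qed

lemma product_one_small_factor_approx:
  fixes a b r :: real
  assumes "a * b = 1" and "a > 1" and "\<bar>a + b - 4 * r\<bar> \<le> 2" and "r \<ge> 2"
  shows "\<bar>b - 1 / (4 * r)\<bar> \<le> 3 / (8 * r^2)"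
proof -
  have b: "b = 1 / a" using assms(1,2) by (simp add: field_simps)
  then have "0 < b" "b < 1" using assms(2) by auto
  then have a_near: "\<bar>4 * r - a\<bar> \<le> 3" and a_big: "2 * r \<le> a" using assms(3,4) by linarith+
  have "b - 1 / (4 * r) = (4 * r - a) / (4 * r * a)"
    using b assms(2,4) by (simp add: field_simps)
  then have "\<bar>b - 1 / (4 * r)\<bar> = \<bar>4 * r - a\<bar> / (4 * r * a)"
    using assms(2,4) by simp
  also have "\<dots> \<le> 3 / (4 * r * a)"
    using a_near assms(2,4) by (intro divide_right_mono) auto
  also have "\<dots> \<le> 3 / (4 * r * (2 * r))"
    using a_big assms(4) by (intro divide_left_mono mult_left_mono) auto
  finally show ?thesis by (simp add: power2_eq_square)
qed

definition phi_dev_sq :: "real \<Rightarrow> real \<Rightarrow> real" where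
  "phi_dev_sq y x = (cmod (phi x (\<i> * complex_of_real y) - \<i> * complex_of_real y))^2"

lemma phi_dev_sq_reciprocal:
  fixes x y :: real
  assumes "y > 1"
  obtains a where "a * phi_dev_sq y x = 1" and "a > 1"
    and "a + phi_dev_sq y x = 2 * cmod ((\<i> * complex_of_real y - x)^2 - 1) + 2 * (x^2 + y^2)"
proof
  define w where "w = \<i> * complex_of_real y - x"
  define s where "s = sqrt_upper (w^2 - 1)"
  have "Im w = y" and "Re w = -x" unfolding w_def by simp_all
  then have norm_w: "(cmod w)^2 = x^2 + y^2" unfolding cmod_power2 by simp
  have s: "s^2 = w^2 - 1" "Im s > 0"
    unfolding s_def
    using power2_sqrt_upper Im_sqrt_upper_pos square_minus_one_not_nonneg_real \<open>Im w = y\<close> assms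
    by auto
  have dev: "phi_dev_sq y x = (cmod (s - w))^2"
    unfolding phi_dev_sq_def phi_def s_def w_def by (simp add: algebra_simps)
  show "(cmod (s + w))^2 * phi_dev_sq y x = 1"
    using norm_sub_add_of_square_minus_one(1)[OF s(1)] unfolding dev by (simp add: mult.commute)
  have "(cmod (s + w))^2 + phi_dev_sq y x = 2 * cmod (w^2 - 1) + 2 * (x^2 + y^2)"
    using norm_sub_add_of_square_minus_one(2)[OF s(1)] unfolding dev norm_w by simp
  then show "(cmod (s + w))^2 + phi_dev_sq y x = 2 * cmod ((\<i> * complex_of_real y - x)^2 - 1) + 2 * (x^2 + y^2)"
    unfolding w_def .
  have "Im (s + w) > 1" using s(2) \<open>Im w = y\<close> assms by simp
  then have "cmod (s + w) > 1" using abs_Im_le_cmod[of "s + w"] by linarith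
  then show "(cmod (s + w))^2 > 1" by (simp add: one_less_power)
qed

text \<open>\<open>sqrt_upper\<close> is defined by a description, so measurability is read off the closed
  form of the integrand as the smaller root of \<open>t\<^sup>2 - S t + 1\<close>.\<close>

lemma borel_measurable_phi_dev_sq:
  assumes "y > 1"
  shows "phi_dev_sq y \<in> borel_measurable lborel"
proof -
  have "phi_dev_sq y = (\<lambda>x. let S = 2 * cmod ((\<i> * complex_of_real y - x)^2 - 1) + 2 * (x^2 + y^2)
                         in (S - sqrt (S^2 - 4)) / 2)"
  proof
    fix x
    obtain a where a: "a * phi_dev_sq y x = 1" "a > 1"
      and sum: "a + phi_dev_sq y x = 2 * cmod ((\<i> * complex_of_real y - x)^2 - 1) + 2 * (x^2 + y^2)"
      using phi_dev_sq_reciprocal[OF assms] .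
    have "phi_dev_sq y x = 1 / a" using a by (simp add: field_simps)
    moreover have "1 / a < 1" using a(2) by simp
    ultimately have "phi_dev_sq y x \<le> a" using a(2) by linarith
    then show "phi_dev_sq y x = (let S = 2 * cmod ((\<i> * complex_of_real y - x)^2 - 1) + 2 * (x^2 + y^2)
                         in (S - sqrt (S^2 - 4)) / 2)"
      using product_one_small_factor_eq[OF a(1)] by (simp only: sum Let_def)
  qed
  then show ?thesis by (simp add: Let_def)
qed

lemma phi_dev_sq_approx:
  fixes x y :: real
  assumes "y \<ge> 2"
  shows "\<bar>phi_dev_sq y x - 1 / (4 * (x^2 + y^2))\<bar> \<le> 3 / (8 * y^2 * (x^2 + y^2))"
proof -
  define r where "r = x^2 + y^2"
  have "y^2 \<le> r" unfolding r_def by simp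
  moreover have "4 \<le> y^2" using power_mono[OF assms, of 2] by simp
  ultimately have r: "y^2 \<le> r" "4 \<le> r" by linarith+
  obtain a where a: "a * phi_dev_sq y x = 1" "a > 1"
    and sum: "a + phi_dev_sq y x = 2 * cmod ((\<i> * complex_of_real y - x)^2 - 1) + 2 * r"
    using phi_dev_sq_reciprocal[of y x] assms unfolding r_def by force
  have "\<bar>cmod ((\<i> * complex_of_real y - x)^2 - 1) - r\<bar> \<le> 1"
    using norm_triangle_ineq3[of "(\<i> * complex_of_real y - x)^2 - 1" "(\<i> * complex_of_real y - x)^2"]
    by (simp add: r_def norm_power cmod_power2)
  then have "\<bar>a + phi_dev_sq y x - 4 * r\<bar> \<le> 2" unfolding sum by linarith
  then have "\<bar>phi_dev_sq y x - 1 / (4 * r)\<bar> \<le> 3 / (8 * r^2)"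
    using product_one_small_factor_approx a r by simp
  also have "\<dots> \<le> 3 / (8 * y^2 * r)"
  proof (rule divide_left_mono)
    show "8 * y^2 * r \<le> 8 * r^2" using r by (simp add: power2_eq_square mult_right_mono)
    show "0 < 8 * r^2 * (8 * y^2 * r)" using r assms by simp
  qed simp
  finally show ?thesis unfolding r_def .
qed

lemma
  fixes y :: real
  assumes "y > 0"
  shows integrable_inverse_sum_squares: "integrable lborel (\<lambda>x. 1 / (x^2 + y^2))"
    and integral_inverse_sum_squares: "(\<integral>x. 1 / (x^2 + y^2) \<partial>lborel) = pi / y"
proof -
  have deriv: "((\<lambda>x. arctan (x / y) / y) has_real_derivative 1 / (x^2 + y^2)) (at x)" for x
  proof -
    have "x * (x * (y * y)) + y * (y * (y * y)) > 0" using assms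
      by (intro add_nonneg_pos) (auto simp: mult.assoc[symmetric])
    then show ?thesis using assms
      by (auto intro!: derivative_eq_intros simp: field_simps power2_eq_square)
  qed
  have "filterlim (\<lambda>x. inverse y * x) at_top at_top"
    using assms by (intro filterlim_tendsto_pos_mult_at_top[OF tendsto_const _ filterlim_ident]) auto
  then have lim_top: "((\<lambda>x. arctan (x / y) / y) \<longlongrightarrow> (pi / 2) / y) at_top"
    using assms by (intro tendsto_intros filterlim_compose[OF tendsto_arctan_at_top])
       (auto simp: divide_inverse mult.commute)
  have "filterlim (\<lambda>x. inverse y * x) at_bot at_bot"
    using assms by (intro filterlim_tendsto_pos_mult_at_bot[OF tendsto_const _ filterlim_ident]) auto
  then have lim_bot: "((\<lambda>x. arctan (x / y) / y) \<longlongrightarrow> (- (pi / 2)) / y) at_bot"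
    using assms by (intro tendsto_intros filterlim_compose[OF tendsto_arctan_at_bot])
       (auto simp: divide_inverse mult.commute)
  note FTC = interval_integral_FTC_nonneg[where a = "-\<infinity>" and b = "\<infinity>"
      and F = "\<lambda>x. arctan (x / y) / y" and f = "\<lambda>x. 1 / (x^2 + y^2)"
      and A = "(- (pi / 2)) / y" and B = "(pi / 2) / y"]
  have "set_integrable lborel (einterval (-\<infinity>) \<infinity>) (\<lambda>x. 1 / (x^2 + y^2))"
    and "(LBINT x=-\<infinity>..\<infinity>. 1 / (x^2 + y^2)) = (pi / 2) / y - (- (pi / 2)) / y"
    by (rule FTC; use deriv lim_top lim_bot assms in \<open>auto simp: ereal_tendsto_simps add_pos_pos\<close>)+
  then show "integrable lborel (\<lambda>x. 1 / (x^2 + y^2))"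
    and "(\<integral>x. 1 / (x^2 + y^2) \<partial>lborel) = pi / y"
    by (simp_all add: set_integrable_def interval_lebesgue_integral_def set_lebesgue_integral_def
        einterval_eq_UNIV)
qed

lemma integral_approx_by_dominated_error:
  fixes f g e :: "'a \<Rightarrow> real"
  assumes "f \<in> borel_measurable M" and "integrable M g" and "integrable M e"
    and "\<And>x. x \<in> space M \<Longrightarrow> \<bar>f x - g x\<bar> \<le> e x"
  shows "integrable M f" and "\<bar>integral\<^sup>L M f - integral\<^sup>L M g\<bar> \<le> integral\<^sup>L M e"
proof -
  have diff: "integrable M (\<lambda>x. f x - g x)"
    by (rule Bochner_Integration.integrable_bound[OF assms(3)])
       (use assms in \<open>auto intro!: AE_I2 order_trans[OF _ abs_ge_self]\<close>)
  then have "integrable M (\<lambda>x. (f x - g x) + g x)"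
    using assms(2) by (rule Bochner_Integration.integrable_add)
  then show "integrable M f" by simp
  then have "integral\<^sup>L M f - integral\<^sup>L M g = integral\<^sup>L M (\<lambda>x. f x - g x)"
    using assms(2) by simp
  also have "\<bar>\<dots>\<bar> \<le> integral\<^sup>L M (\<lambda>x. \<bar>f x - g x\<bar>)"
    using integral_norm_bound[of M "\<lambda>x. f x - g x"] by simp
  also have "\<dots> \<le> integral\<^sup>L M e"
    using diff assms by (intro integral_mono) auto
  finally show "\<bar>integral\<^sup>L M f - integral\<^sup>L M g\<bar> \<le> integral\<^sup>L M e" .
qed

theorem lemmaA1:
  shows "\<exists>c>0. \<exists>y0>0. \<forall>y::real. y > y0 \<longrightarrow>
    \<bar>(\<integral>x. (cmod (phi x (\<i> * complex_of_real y) - \<i> * complex_of_real y))^2 \<partial>lborel)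
      - min 1 (pi / (4 * y))\<bar> < c / y^3"
proof (intro exI[of _ 2] conjI exI[of _ 2] allI impI)
  fix y :: real
  assume "y > 2"
  then have "y > 0" by simp
  let ?b = "\<lambda>x. 1 / (x^2 + y^2)"
  have b_int: "integrable lborel ?b" and b_integral: "integral\<^sup>L lborel ?b = pi / y"
    using \<open>y > 0\<close> by (rule integrable_inverse_sum_squares, rule integral_inverse_sum_squares)
  have "\<bar>integral\<^sup>L lborel (phi_dev_sq y) - integral\<^sup>L lborel (\<lambda>x. 1 / 4 * ?b x)\<bar>
      \<le> integral\<^sup>L lborel (\<lambda>x. 3 / (8 * y^2) * ?b x)"
  proof (rule integral_approx_by_dominated_error)
    show "phi_dev_sq y \<in> borel_measurable lborel"
      using \<open>y > 2\<close> by (intro borel_measurable_phi_dev_sq) simp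
    show "integrable lborel (\<lambda>x. 1 / 4 * ?b x)" "integrable lborel (\<lambda>x. 3 / (8 * y^2) * ?b x)"
      using b_int by (rule integrable_mult_right)+
    show "\<bar>phi_dev_sq y x - 1 / 4 * ?b x\<bar> \<le> 3 / (8 * y^2) * ?b x" for x
      using phi_dev_sq_approx[of y x] \<open>y > 2\<close> by simp
  qed
  then have "\<bar>integral\<^sup>L lborel (phi_dev_sq y) - pi / (4 * y)\<bar> \<le> 3 / (8 * y^2) * (pi / y)"
    by (simp only: integral_mult_right_zero b_integral)
  also have "\<dots> < 2 / y^3"
    using pi_less_4 \<open>y > 0\<close> by (simp add: field_simps power2_eq_square power3_eq_cube)
  finally have "\<bar>integral\<^sup>L lborel (phi_dev_sq y) - pi / (4 * y)\<bar> < 2 / y^3" .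
  moreover have "pi / (4 * y) \<le> 1"
    using pi_less_4 \<open>y > 2\<close> by (simp add: field_simps)
  ultimately show "\<bar>(\<integral>x. (cmod (phi x (\<i> * complex_of_real y) - \<i> * complex_of_real y))^2 \<partial>lborel)
      - min 1 (pi / (4 * y))\<bar> < 2 / y^3"
    by (simp add: phi_dev_sq_def[abs_def] min_absorb2)
qed simp_all

end
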